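(* Let $X$ and $X'$ be independent identically distributed real random variables with distribution function $F$, $\mathbb E X=0$ and $\mathbb E X^2<\infty$. Put $\sigma^2(z)=\mathbb E X^2\mathbf 1(|X|\ge z)$ and $\sigma_s^2(z)=\mathbb E(X-X')^2\mathbf 1(|X-X'|\ge z)$, $z\ge0$. Then $$\sigma_s^2(z)\le2\sigma^2(\alpha z)+2\sigma^2((1-\alpha)z),\qquad z\ge0,\ \alpha\in[0,1].$$ In particular $\sigma_s^2(z)\le4\sigma^2(z/2)$ for all $z\ge0$, and the constant $4$ is best possible: for every $z>0$, $\sup\sigma_s^2(z)/\sigma^2(z/2)=4$, where the supremum is over all distributions of $X$ with $\mathbb E X=0$ (and finite second moment), and it is delivered by the two-point distributions $\mathbb P(X=qz)=p$, $\mathbb P(X=-pz)=q=1-p$ as $p\to\frac12+$. *)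

theory Defs
  imports "HOL-Probability.Probability"
begin

definition sigma2 :: "real measure \<Rightarrow> real \<Rightarrow> real" where
  "sigma2 N z = (\<integral>x. x\<^sup>2 * indicator {x. \<bar>x\<bar> \<ge> z} x \<partial>N)"

text \<open>Symmetrized version: sigma_s^2(z) = E (X - X')^2 1(|X - X'| >= z) with X, X'
  independent with common law N, i.e. (X, X') has law N \<Otimes> N.\<close>
definition sigma_s2 :: "real measure \<Rightarrow> real \<Rightarrow> real" where
  "sigma_s2 N z = (\<integral>w. (fst w - snd w)\<^sup>2 * indicator {w. \<bar>fst w - snd w\<bar> \<ge> z} w \<partial>(N \<Otimes>\<^sub>M N))"

definition two_point :: "real \<Rightarrow> real \<Rightarrow> real measure" where
  "two_point z p = distr (measure_pmf (bernoulli_pmf p)) borel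
      (\<lambda>b. if b then (1 - p) * z else - p * z)"

end

theory Submission
  imports Defs
begin

text \<open>Since \<open>\<bar>X - X'\<bar> \<ge> a + b\<close> forces \<open>\<bar>X\<bar> \<ge> a\<close> or \<open>\<bar>X'\<bar> \<ge> b\<close>, it suffices to show
  \<open>E (X - X')\<^sup>2 1(\<bar>X\<bar> \<ge> a) \<le> 2 E X\<^sup>2 1(\<bar>X\<bar> \<ge> a)\<close>. Expanding the square, independence and
  \<open>E X' = 0\<close> kill the cross term and turn the last term into \<open>P(\<bar>X\<bar> \<ge> a) E X\<^sup>2\<close>, which is at
  most \<open>E X\<^sup>2 1(\<bar>X\<bar> \<ge> a)\<close>: restricting to the event \<open>\<bar>X\<bar> \<ge> a\<close> can only raise the mean of
  \<open>X\<^sup>2\<close>. For sharpness, the two-point law with \<open>P(X = (1 - p) z) = p\<close> has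
  \<open>\<sigma>\<^sub>s\<^sup>2(z) / \<sigma>\<^sup>2(z/2) = 2 / p\<close> for \<open>1/2 < p < 1\<close>, which tends to 4 as \<open>p \<rightarrow> 1/2\<close>.\<close>

lemma (in prob_space) indep_var_commute:
  assumes "indep_var S X T Y"
  shows "indep_var T Y S X"
proof -
  have "prob (a \<inter> b) = prob a * prob b" if "prob (b \<inter> a) = prob b * prob a" for a b
    using that by (simp add: Int_commute mult.commute)
  then show ?thesis
    using assms unfolding indep_var_eq indep_sets2_eq by blast
qed

lemma distr_eq_integral_comp:
  fixes X X' :: "'a \<Rightarrow> real" and g :: "real \<Rightarrow> real"
  assumes [measurable]: "X \<in> borel_measurable M" "X' \<in> borel_measurable M" "g \<in> borel_measurable borel"
    and distr_eq: "distr M borel X = distr M borel X'"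
  shows "integrable M (\<lambda>\<omega>. g (X' \<omega>)) \<longleftrightarrow> integrable M (\<lambda>\<omega>. g (X \<omega>))"
    and "(\<integral>\<omega>. g (X' \<omega>) \<partial>M) = (\<integral>\<omega>. g (X \<omega>) \<partial>M)"
  using integrable_distr_eq[of X M borel g] integrable_distr_eq[of X' M borel g]
    integral_distr[of X M borel g] integral_distr[of X' M borel g] distr_eq
  by simp_all

lemma (in prob_space) integrable_diff_sq_indicator:
  fixes X X' :: "'a \<Rightarrow> real"
  assumes [measurable]: "X \<in> borel_measurable M" "X' \<in> borel_measurable M" "Measurable.pred M P"
    and "integrable M (\<lambda>\<omega>. (X \<omega>)\<^sup>2)" "integrable M (\<lambda>\<omega>. (X' \<omega>)\<^sup>2)"
  shows "integrable M (\<lambda>\<omega>. (X \<omega> - X' \<omega>)\<^sup>2 * indicator {\<omega>. P \<omega>} \<omega>)"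
proof (rule Bochner_Integration.integrable_bound)
  show "integrable M (\<lambda>\<omega>. 2 * (X \<omega>)\<^sup>2 + 2 * (X' \<omega>)\<^sup>2)"
    using assms(4,5) by simp
  have "(x - y)\<^sup>2 \<le> 2 * x\<^sup>2 + 2 * y\<^sup>2" for x y :: real
    using sum_squares_ge_zero[of "x + y" 0] by (simp add: power2_eq_square algebra_simps)
  then show "AE \<omega> in M. norm ((X \<omega> - X' \<omega>)\<^sup>2 * indicator {\<omega>. P \<omega>} \<omega>)
      \<le> norm (2 * (X \<omega>)\<^sup>2 + 2 * (X' \<omega>)\<^sup>2)"
    by (intro AE_I2) (auto simp: indicator_def intro: order_trans)
qed measurable

lemma (in prob_space) tail_prob_mult_second_moment_le:
  fixes Y :: "'a \<Rightarrow> real"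
  assumes [measurable]: "Y \<in> borel_measurable M"
    and Y2: "integrable M (\<lambda>\<omega>. (Y \<omega>)\<^sup>2)" and a: "0 \<le> a"
  shows "prob {\<omega> \<in> space M. a \<le> \<bar>Y \<omega>\<bar>} * expectation (\<lambda>\<omega>. (Y \<omega>)\<^sup>2)
    \<le> expectation (\<lambda>\<omega>. (Y \<omega>)\<^sup>2 * indicator {\<omega>. a \<le> \<bar>Y \<omega>\<bar>} \<omega>)"
proof -
  define I :: "'a \<Rightarrow> real" where "I \<omega> = indicator {\<omega>. a \<le> \<bar>Y \<omega>\<bar>} \<omega>" for \<omega>
  define P where "P = prob {\<omega> \<in> space M. a \<le> \<bar>Y \<omega>\<bar>}"
  define s where "s = expectation (\<lambda>\<omega>. (Y \<omega>)\<^sup>2 * I \<omega>)"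
  have [measurable]: "I \<in> borel_measurable M"
    unfolding I_def by measurable
  have EI: "expectation I = P"
    unfolding I_def P_def by (simp add: Collect_conj_eq Int_commute)
  have iI: "integrable M I"
    by (rule integrable_const_bound[where B=1]) (auto simp: I_def)
  have iY2I: "integrable M (\<lambda>\<omega>. (Y \<omega>)\<^sup>2 * I \<omega>)"
    by (rule Bochner_Integration.integrable_bound[OF Y2]) (auto simp: I_def indicator_def)
  have iY2I': "integrable M (\<lambda>\<omega>. (Y \<omega>)\<^sup>2 * (1 - I \<omega>))"
    by (rule Bochner_Integration.integrable_bound[OF Y2]) (auto simp: I_def indicator_def)
  have small: "(Y \<omega>)\<^sup>2 * (1 - I \<omega>) \<le> a\<^sup>2 * (1 - I \<omega>)"
    and large: "a\<^sup>2 * I \<omega> \<le> (Y \<omega>)\<^sup>2 * I \<omega>" for \<omega>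
    using a abs_le_square_iff[of a "Y \<omega>"] by (auto simp: I_def)
  have "a\<^sup>2 * P = expectation (\<lambda>\<omega>. a\<^sup>2 * I \<omega>)"
    by (simp add: EI)
  also have "\<dots> \<le> s"
    unfolding s_def by (rule integral_mono) (use iI iY2I large in auto)
  finally have tail: "a\<^sup>2 * P \<le> s" .
  have "expectation (\<lambda>\<omega>. (Y \<omega>)\<^sup>2) = expectation (\<lambda>\<omega>. (Y \<omega>)\<^sup>2 * I \<omega> + (Y \<omega>)\<^sup>2 * (1 - I \<omega>))"
    by (simp add: algebra_simps)
  also have "\<dots> = s + expectation (\<lambda>\<omega>. (Y \<omega>)\<^sup>2 * (1 - I \<omega>))"
    unfolding s_def by (rule Bochner_Integration.integral_add[OF iY2I iY2I'])
  also have "\<dots> \<le> s + expectation (\<lambda>\<omega>. a\<^sup>2 * (1 - I \<omega>))"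
    using integral_mono[OF iY2I' _ small] iI by simp
  also have "\<dots> = s + a\<^sup>2 * (1 - P)"
    using iI by (simp add: EI prob_space)
  finally have body: "expectation (\<lambda>\<omega>. (Y \<omega>)\<^sup>2) \<le> s + a\<^sup>2 * (1 - P)" .
  have P01: "0 \<le> P" "P \<le> 1"
    by (simp_all add: P_def)
  have "P * expectation (\<lambda>\<omega>. (Y \<omega>)\<^sup>2) \<le> P * s + (a\<^sup>2 * P) * (1 - P)"
    using mult_left_mono[OF body P01(1)] by (simp add: algebra_simps)
  also have "\<dots> \<le> P * s + s * (1 - P)"
    using tail P01 by (simp add: mult_right_mono)
  finally show ?thesis
    by (simp add: P_def s_def I_def algebra_simps)
qed

lemma (in prob_space) expectation_diff_sq_tail_le:
  fixes Y Z :: "'a \<Rightarrow> real"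
  assumes ind: "indep_var borel Y borel Z"
    and [measurable]: "Y \<in> borel_measurable M" "Z \<in> borel_measurable M"
    and Y2: "integrable M (\<lambda>\<omega>. (Y \<omega>)\<^sup>2)" and Z2: "integrable M (\<lambda>\<omega>. (Z \<omega>)\<^sup>2)"
    and EZ: "expectation Z = 0"
    and EZ2: "expectation (\<lambda>\<omega>. (Z \<omega>)\<^sup>2) \<le> expectation (\<lambda>\<omega>. (Y \<omega>)\<^sup>2)"
    and a: "0 \<le> a"
  shows "expectation (\<lambda>\<omega>. (Y \<omega> - Z \<omega>)\<^sup>2 * indicator {\<omega>. a \<le> \<bar>Y \<omega>\<bar>} \<omega>)
    \<le> 2 * expectation (\<lambda>\<omega>. (Y \<omega>)\<^sup>2 * indicator {\<omega>. a \<le> \<bar>Y \<omega>\<bar>} \<omega>)"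
proof -
  define h :: "real \<Rightarrow> real" where "h = indicator {y. a \<le> \<bar>y\<bar>}"
  define I where "I = h \<circ> Y"
  define s where "s = expectation (\<lambda>\<omega>. (Y \<omega>)\<^sup>2 * I \<omega>)"
  have I_eq: "I \<omega> = indicator {\<omega>. a \<le> \<bar>Y \<omega>\<bar>} \<omega>" for \<omega>
    by (simp add: I_def h_def indicator_def)
  have [measurable]: "h \<in> borel_measurable borel"
    unfolding h_def by measurable
  have [measurable]: "I \<in> borel_measurable M"
    unfolding I_def by measurable
  have iI: "integrable M I"
    by (rule integrable_const_bound[where B=1]) (auto simp: I_eq)
  have iYI: "integrable M (\<lambda>\<omega>. Y \<omega> * I \<omega>)"
    by (rule Bochner_Integration.integrable_bound[OF square_integrable_imp_integrable[OF _ Y2]])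
      (auto simp: I_eq indicator_def)
  have iY2I: "integrable M (\<lambda>\<omega>. (Y \<omega>)\<^sup>2 * I \<omega>)"
    by (rule Bochner_Integration.integrable_bound[OF Y2]) (auto simp: I_eq indicator_def)
  have iZ: "integrable M Z"
    by (rule square_integrable_imp_integrable[OF _ Z2]) simp
  have ind_YI_Z: "indep_var borel (\<lambda>\<omega>. Y \<omega> * I \<omega>) borel Z"
    using indep_var_compose[OF ind, of "\<lambda>y. y * h y" borel id borel] by (simp add: comp_def I_def)
  have ind_I_Z2: "indep_var borel I borel (\<lambda>\<omega>. (Z \<omega>)\<^sup>2)"
    using indep_var_compose[OF ind, of h borel "\<lambda>z. z\<^sup>2" borel] by (simp add: comp_def I_def)
  have cross: "expectation (\<lambda>\<omega>. Y \<omega> * I \<omega> * Z \<omega>) = 0"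
    using indep_var_lebesgue_integral[OF ind_YI_Z iYI iZ] EZ by simp
  have "expectation (\<lambda>\<omega>. I \<omega> * (Z \<omega>)\<^sup>2) = prob {\<omega> \<in> space M. a \<le> \<bar>Y \<omega>\<bar>} * expectation (\<lambda>\<omega>. (Z \<omega>)\<^sup>2)"
    using indep_var_lebesgue_integral[OF ind_I_Z2 iI Z2]
    by (simp add: I_eq Collect_conj_eq Int_commute)
  also have "\<dots> \<le> s"
    using order_trans[OF mult_left_mono[OF EZ2 measure_nonneg] tail_prob_mult_second_moment_le[OF _ Y2 a]]
    by (simp add: s_def I_eq)
  finally have second: "expectation (\<lambda>\<omega>. I \<omega> * (Z \<omega>)\<^sup>2) \<le> s" .
  have "(\<lambda>\<omega>. (Y \<omega> - Z \<omega>)\<^sup>2 * I \<omega>) = (\<lambda>\<omega>. ((Y \<omega>)\<^sup>2 * I \<omega> - 2 * (Y \<omega> * I \<omega> * Z \<omega>)) + I \<omega> * (Z \<omega>)\<^sup>2)"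
    by (simp add: power2_eq_square algebra_simps)
  then have "expectation (\<lambda>\<omega>. (Y \<omega> - Z \<omega>)\<^sup>2 * I \<omega>) = s + expectation (\<lambda>\<omega>. I \<omega> * (Z \<omega>)\<^sup>2)"
    using iY2I indep_var_integrable[OF ind_YI_Z iYI iZ] indep_var_integrable[OF ind_I_Z2 iI Z2] cross
    by (simp add: s_def)
  then show ?thesis
    using second by (simp add: s_def I_eq)
qed

lemma (in prob_space) iid_tail_moment_diff_le:
  fixes X X' :: "'a \<Rightarrow> real"
  assumes [measurable]: "X \<in> borel_measurable M" "X' \<in> borel_measurable M"
    and ind: "indep_var borel X borel X'" and distr_eq: "distr M borel X = distr M borel X'"
    and X2: "integrable M (\<lambda>\<omega>. (X \<omega>)\<^sup>2)" and EX: "expectation X = 0"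
    and a: "0 \<le> a" and b: "0 \<le> b"
  shows "expectation (\<lambda>\<omega>. (X \<omega> - X' \<omega>)\<^sup>2 * indicator {\<omega>. a + b \<le> \<bar>X \<omega> - X' \<omega>\<bar>} \<omega>)
    \<le> 2 * expectation (\<lambda>\<omega>. (X \<omega>)\<^sup>2 * indicator {\<omega>. a \<le> \<bar>X \<omega>\<bar>} \<omega>)
     + 2 * expectation (\<lambda>\<omega>. (X \<omega>)\<^sup>2 * indicator {\<omega>. b \<le> \<bar>X \<omega>\<bar>} \<omega>)"
proof -
  note comp = distr_eq_integral_comp[OF assms(1,2) _ distr_eq]
  have X'2: "integrable M (\<lambda>\<omega>. (X' \<omega>)\<^sup>2)"
    using comp(1)[of "\<lambda>x. x\<^sup>2"] X2 by simp
  have EX': "expectation X' = 0"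
    using comp(2)[of "\<lambda>x. x"] EX by simp
  have EX'2: "expectation (\<lambda>\<omega>. (X' \<omega>)\<^sup>2) = expectation (\<lambda>\<omega>. (X \<omega>)\<^sup>2)"
    using comp(2)[of "\<lambda>x. x\<^sup>2"] by simp
  have tail': "expectation (\<lambda>\<omega>. (X' \<omega>)\<^sup>2 * indicator {\<omega>. b \<le> \<bar>X' \<omega>\<bar>} \<omega>)
      = expectation (\<lambda>\<omega>. (X \<omega>)\<^sup>2 * indicator {\<omega>. b \<le> \<bar>X \<omega>\<bar>} \<omega>)"
    using comp(2)[of "\<lambda>x. x\<^sup>2 * indicator {x. b \<le> \<bar>x\<bar>} x"] by (simp add: indicator_def)
  have left: "expectation (\<lambda>\<omega>. (X \<omega> - X' \<omega>)\<^sup>2 * indicator {\<omega>. a \<le> \<bar>X \<omega>\<bar>} \<omega>)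
      \<le> 2 * expectation (\<lambda>\<omega>. (X \<omega>)\<^sup>2 * indicator {\<omega>. a \<le> \<bar>X \<omega>\<bar>} \<omega>)"
    using expectation_diff_sq_tail_le[OF ind _ _ X2 X'2 EX' _ a] EX'2 by simp
  have "expectation (\<lambda>\<omega>. (X' \<omega> - X \<omega>)\<^sup>2 * indicator {\<omega>. b \<le> \<bar>X' \<omega>\<bar>} \<omega>)
      \<le> 2 * expectation (\<lambda>\<omega>. (X' \<omega>)\<^sup>2 * indicator {\<omega>. b \<le> \<bar>X' \<omega>\<bar>} \<omega>)"
    using expectation_diff_sq_tail_le[OF indep_var_commute[OF ind] _ _ X'2 X2 EX _ b] EX'2 by simp
  then have right: "expectation (\<lambda>\<omega>. (X \<omega> - X' \<omega>)\<^sup>2 * indicator {\<omega>. b \<le> \<bar>X' \<omega>\<bar>} \<omega>)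
      \<le> 2 * expectation (\<lambda>\<omega>. (X \<omega>)\<^sup>2 * indicator {\<omega>. b \<le> \<bar>X \<omega>\<bar>} \<omega>)"
    by (simp add: power2_commute tail')
  note integrable = integrable_diff_sq_indicator[OF assms(1,2) _ X2 X'2]
  have "expectation (\<lambda>\<omega>. (X \<omega> - X' \<omega>)\<^sup>2 * indicator {\<omega>. a + b \<le> \<bar>X \<omega> - X' \<omega>\<bar>} \<omega>)
      \<le> expectation (\<lambda>\<omega>. (X \<omega> - X' \<omega>)\<^sup>2 * indicator {\<omega>. a \<le> \<bar>X \<omega>\<bar>} \<omega>
          + (X \<omega> - X' \<omega>)\<^sup>2 * indicator {\<omega>. b \<le> \<bar>X' \<omega>\<bar>} \<omega>)"
    by (intro integral_mono Bochner_Integration.integrable_add integrable)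
      (auto simp: indicator_def)
  also have "\<dots> = expectation (\<lambda>\<omega>. (X \<omega> - X' \<omega>)\<^sup>2 * indicator {\<omega>. a \<le> \<bar>X \<omega>\<bar>} \<omega>)
      + expectation (\<lambda>\<omega>. (X \<omega> - X' \<omega>)\<^sup>2 * indicator {\<omega>. b \<le> \<bar>X' \<omega>\<bar>} \<omega>)"
    by (intro Bochner_Integration.integral_add integrable) measurable
  finally show ?thesis
    using left right by simp
qed

lemma (in prob_space) distr_pair_snd:
  assumes "sigma_finite_measure N"
  shows "distr (M \<Otimes>\<^sub>M N) N snd = N"
proof (intro measure_eqI)
  interpret N: sigma_finite_measure N by (rule assms)
  fix A assume A: "A \<in> sets (distr (M \<Otimes>\<^sub>M N) N snd)"
  then have "emeasure (distr (M \<Otimes>\<^sub>M N) N snd) A = emeasure (M \<Otimes>\<^sub>M N) (space M \<times> A)"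
    by (auto simp: emeasure_distr space_pair_measure dest: sets.sets_into_space
        intro!: arg_cong2[where f=emeasure])
  with A show "emeasure (distr (M \<Otimes>\<^sub>M N) N snd) A = emeasure N A"
    by (simp add: N.emeasure_pair_measure_Times emeasure_space_1)
qed simp

lemma indep_var_fst_snd:
  assumes "prob_space M1" "prob_space M2"
  shows "prob_space.indep_var (M1 \<Otimes>\<^sub>M M2) M1 fst M2 snd"
proof -
  interpret M1: prob_space M1 by (rule assms)
  interpret M2: prob_space M2 by (rule assms)
  interpret P: pair_prob_space M1 M2 ..
  show ?thesis
    unfolding P.indep_var_distribution_eq
    by (simp add: M2.distr_pair_fst M1.distr_pair_snd M2.sigma_finite_measure_axioms distr_id)
qed

lemma iid_coordinates_pair_measure:
  fixes N :: "real measure"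
  assumes N: "prob_space N" and sN: "sets N = sets borel"
  shows "fst \<in> borel_measurable (N \<Otimes>\<^sub>M N)" "snd \<in> borel_measurable (N \<Otimes>\<^sub>M N)"
    and "distr (N \<Otimes>\<^sub>M N) borel fst = N" "distr (N \<Otimes>\<^sub>M N) borel snd = N"
    and "prob_space.indep_var (N \<Otimes>\<^sub>M N) borel fst borel snd"
proof -
  interpret N: prob_space N by (rule N)
  interpret P: pair_prob_space N N ..
  have borel_N: "measurable (N \<Otimes>\<^sub>M N) borel = measurable (N \<Otimes>\<^sub>M N) N"
    by (rule measurable_cong_sets[OF refl sN[symmetric]])
  show "fst \<in> borel_measurable (N \<Otimes>\<^sub>M N)" "snd \<in> borel_measurable (N \<Otimes>\<^sub>M N)"
    unfolding borel_N by simp_all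
  have "distr (N \<Otimes>\<^sub>M N) borel f = distr (N \<Otimes>\<^sub>M N) N f" for f :: "real \<times> real \<Rightarrow> real"
    by (rule distr_cong) (simp_all add: sN)
  then show "distr (N \<Otimes>\<^sub>M N) borel fst = N" "distr (N \<Otimes>\<^sub>M N) borel snd = N"
    by (simp_all add: N.distr_pair_fst N.distr_pair_snd N.sigma_finite_measure_axioms)
  show "prob_space.indep_var (N \<Otimes>\<^sub>M N) borel fst borel snd"
    using indep_var_fst_snd[OF N N]
    unfolding P.indep_var_eq borel_N by (simp add: sN)
qed

lemma pair_measure_coordinate_integral:
  fixes N :: "real measure" and g :: "real \<Rightarrow> real"
  assumes "prob_space N" "sets N = sets borel" and [measurable]: "g \<in> borel_measurable borel"
  shows "integrable (N \<Otimes>\<^sub>M N) (\<lambda>w. g (fst w)) \<longleftrightarrow> integrable N g"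
    and "integrable (N \<Otimes>\<^sub>M N) (\<lambda>w. g (snd w)) \<longleftrightarrow> integrable N g"
    and "(\<integral>w. g (fst w) \<partial>(N \<Otimes>\<^sub>M N)) = (\<integral>x. g x \<partial>N)"
  using integrable_distr_eq[of fst "N \<Otimes>\<^sub>M N" borel g] integrable_distr_eq[of snd "N \<Otimes>\<^sub>M N" borel g]
    integral_distr[of fst "N \<Otimes>\<^sub>M N" borel g] iid_coordinates_pair_measure[OF assms(1,2)]
  by simp_all

lemma sigma_s2_le:
  fixes N :: "real measure"
  assumes N: "prob_space N" and sN: "sets N = sets borel"
    and N2: "integrable N (\<lambda>x. x\<^sup>2)" and mean: "(\<integral>x. x \<partial>N) = 0"
    and "0 \<le> a" "0 \<le> b"
  shows "sigma_s2 N (a + b) \<le> 2 * sigma2 N a + 2 * sigma2 N b"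
proof -
  note coords = iid_coordinates_pair_measure[OF N sN]
  note transfer = pair_measure_coordinate_integral[OF N sN]
  interpret P: prob_space "N \<Otimes>\<^sub>M N"
    by (simp add: N prob_space_pair)
  have "integrable (N \<Otimes>\<^sub>M N) (\<lambda>w. (fst w)\<^sup>2)"
    using transfer(1)[of "\<lambda>x. x\<^sup>2"] N2 by simp
  moreover have "P.expectation fst = 0"
    using transfer(3)[of "\<lambda>x. x"] mean by simp
  moreover have "P.expectation (\<lambda>w. (fst w)\<^sup>2 * indicator {w. c \<le> \<bar>fst w\<bar>} w) = sigma2 N c" for c
    using transfer(3)[of "\<lambda>x. x\<^sup>2 * indicator {x. c \<le> \<bar>x\<bar>} x"]
    by (simp add: sigma2_def indicator_def)
  ultimately show ?thesis
    using P.iid_tail_moment_diff_le[OF coords(1,2,5) _ _ _ assms(5,6)] coords(3,4)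
    by (simp add: sigma_s2_def)
qed

lemma prob_space_two_point: "prob_space (two_point z p)"
  unfolding two_point_def by (rule prob_space.prob_space_distr) (simp_all add: prob_space_measure_pmf)

lemma sets_two_point [simp]: "sets (two_point z p) = sets borel"
  by (simp add: two_point_def)

lemma integrable_two_point:
  "g \<in> borel_measurable borel \<Longrightarrow> integrable (two_point z p) (g :: real \<Rightarrow> real)"
  unfolding two_point_def
  by (subst integrable_distr_eq) (simp_all add: integrable_measure_pmf_finite)

lemma integral_two_point:
  assumes "0 \<le> p" "p \<le> 1" "g \<in> borel_measurable borel"
  shows "(\<integral>x. g x \<partial>two_point z p) = p * g ((1 - p) * z) + (1 - p) * g (- p * z)"
  unfolding two_point_def using assms by (subst integral_distr) simp_all

lemma sigma2_two_point:
  assumes z: "0 < z" and p: "1/2 < p" "p \<le> 1"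
  shows "sigma2 (two_point z p) (z / 2) = (1 - p) * p\<^sup>2 * z\<^sup>2"
proof -
  have "\<not> z / 2 \<le> \<bar>(1 - p) * z\<bar>" "z / 2 \<le> \<bar>- p * z\<bar>"
    using z p by (simp_all add: abs_mult field_simps)
  then show ?thesis
    unfolding sigma2_def using p
    by (subst integral_two_point) (simp_all add: power_mult_distrib)
qed

lemma sigma_s2_two_point:
  assumes p: "0 \<le> p" "p \<le> 1"
  shows "sigma_s2 (two_point z p) z = 2 * p * (1 - p) * z\<^sup>2"
proof -
  define N where "N = two_point z p"
  define f where "f w = (fst w - snd w)\<^sup>2 * indicator {w. z \<le> \<bar>fst w - snd w\<bar>} w" for w :: "real \<times> real"
  have N: "prob_space N" and sN: "sets N = sets borel"
    by (simp_all add: N_def prob_space_two_point)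
  interpret P: prob_space "N \<Otimes>\<^sub>M N"
    by (simp add: N prob_space_pair)
  interpret PS: pair_sigma_finite N N
    by (simp add: N pair_sigma_finite_def prob_space_imp_sigma_finite)
  note coords = iid_coordinates_pair_measure[OF N sN]
  note transfer = pair_measure_coordinate_integral[OF N sN]
  have "integrable N (\<lambda>x. x\<^sup>2)"
    unfolding N_def by (rule integrable_two_point) simp
  then have squares: "integrable (N \<Otimes>\<^sub>M N) (\<lambda>w. (fst w)\<^sup>2)" "integrable (N \<Otimes>\<^sub>M N) (\<lambda>w. (snd w)\<^sup>2)"
    using transfer(1,2)[of "\<lambda>x. x\<^sup>2"] by simp_all
  have "integrable (N \<Otimes>\<^sub>M N) f"
    unfolding f_def
    by (rule P.integrable_diff_sq_indicator[OF coords(1,2) _ squares]) (use coords(1,2) in measurable)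
  then have "sigma_s2 N z = (\<integral>x. (\<integral>y. f (x, y) \<partial>N) \<partial>N)"
    unfolding sigma_s2_def f_def[abs_def] by (rule PS.integral_fst'[symmetric])
  also have "\<dots> = 2 * p * (1 - p) * z\<^sup>2"
    using p unfolding N_def f_def
    by (simp add: integral_two_point indicator_def power2_eq_square algebra_simps)
  finally show ?thesis
    unfolding N_def .
qed

lemma two_point_ratio:
  assumes "0 < z" "1/2 < p" "p < 1"
  shows "sigma_s2 (two_point z p) z / sigma2 (two_point z p) (z / 2) = 2 / p"
  using assms by (simp add: sigma2_two_point sigma_s2_two_point power2_eq_square field_simps)

lemma tendsto_two_point_ratio:
  assumes "0 < z"
  shows "((\<lambda>p. sigma_s2 (two_point z p) z / sigma2 (two_point z p) (z / 2)) \<longlongrightarrow> 4) (at_right (1 / 2))"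
proof -
  have "eventually (\<lambda>p. p \<in> {1/2<..<1}) (at_right (1/2 :: real))"
    by (rule eventually_at_right_real) simp
  then have "eventually (\<lambda>p. 2 / p = sigma_s2 (two_point z p) z / sigma2 (two_point z p) (z / 2))
      (at_right (1/2))"
    by eventually_elim (simp add: two_point_ratio assms)
  moreover have "((\<lambda>p. 2 / p) \<longlongrightarrow> 2 / (1/2)) (at_right (1 / 2 :: real))"
    by (intro tendsto_intros) simp
  ultimately show ?thesis
    by (simp add: tendsto_cong)
qed

lemma Sup_sigma_ratio:
  assumes z: "0 < z"
  shows "Sup {sigma_s2 N z / sigma2 N (z / 2) | N.
             prob_space N \<and> sets N = sets borel \<and> integrable N (\<lambda>x. x) \<and>
             integrable N (\<lambda>x. x\<^sup>2) \<and> (\<integral>x. x \<partial>N) = 0 \<and> sigma2 N (z / 2) > 0} = 4"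
    (is "Sup ?S = 4")
proof (rule antisym)
  have bound: "r \<le> 4" if "r \<in> ?S" for r
  proof -
    from that obtain N where r: "r = sigma_s2 N z / sigma2 N (z / 2)"
      and N: "prob_space N" "sets N = sets borel" "integrable N (\<lambda>x. x\<^sup>2)" "(\<integral>x. x \<partial>N) = 0"
      and pos: "sigma2 N (z / 2) > 0"
      by blast
    have "sigma_s2 N (z / 2 + z / 2) \<le> 4 * sigma2 N (z / 2)"
      using sigma_s2_le[OF N, of "z / 2" "z / 2"] z by simp
    then show ?thesis
      using pos by (simp add: r pos_divide_le_eq)
  qed
  have member: "sigma_s2 (two_point z p) z / sigma2 (two_point z p) (z / 2) \<in> ?S"
    if p: "1/2 < p" "p < 1" for p
  proof -
    have "(\<integral>x. x \<partial>two_point z p) = 0"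
      using p by (simp add: integral_two_point algebra_simps)
    moreover have "sigma2 (two_point z p) (z / 2) > 0"
      using p z by (simp add: sigma2_two_point)
    ultimately show ?thesis
      by (auto simp: prob_space_two_point integrable_two_point)
  qed
  have bdd: "bdd_above ?S"
    using bound by (auto simp: bdd_above_def)
  show "Sup ?S \<le> 4"
    by (rule cSup_least) (use member[of "3/4"] bound in auto)
  have "eventually (\<lambda>p. p \<in> {1/2<..<1}) (at_right (1/2 :: real))"
    by (rule eventually_at_right_real) simp
  then have "eventually (\<lambda>p. sigma_s2 (two_point z p) z / sigma2 (two_point z p) (z / 2) \<le> Sup ?S)
      (at_right (1/2))"
    by eventually_elim (auto intro: cSup_upper[OF member bdd])
  then show "4 \<le> Sup ?S"
    by (rule tendsto_upperbound[OF tendsto_two_point_ratio[OF z]]) simp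
qed

theorem theorem3:
  shows
  "(\<forall>(M :: 'a measure) (X :: 'a \<Rightarrow> real) (X' :: 'a \<Rightarrow> real).
      prob_space M \<and> X \<in> borel_measurable M \<and> X' \<in> borel_measurable M \<and>
      prob_space.indep_var M borel X borel X' \<and> distr M borel X = distr M borel X' \<and>
      integrable M X \<and> integrable M (\<lambda>\<omega>. (X \<omega>)\<^sup>2) \<and> prob_space.expectation M X = 0
    \<longrightarrow>
      (let s2 = (\<lambda>z. prob_space.expectation M (\<lambda>\<omega>. (X \<omega>)\<^sup>2 * indicator {\<omega>. \<bar>X \<omega>\<bar> \<ge> z} \<omega>));
           ss2 = (\<lambda>z. prob_space.expectation M
                    (\<lambda>\<omega>. (X \<omega> - X' \<omega>)\<^sup>2 * indicator {\<omega>. \<bar>X \<omega> - X' \<omega>\<bar> \<ge> z} \<omega>))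
       in (\<forall>z \<ge> 0. \<forall>\<alpha> \<in> {0..1}. ss2 z \<le> 2 * s2 (\<alpha> * z) + 2 * s2 ((1 - \<alpha>) * z))
          \<and> (\<forall>z \<ge> 0. ss2 z \<le> 4 * s2 (z / 2))))
   \<and>
   (\<forall>z :: real. z > 0 \<longrightarrow>
      Sup {sigma_s2 N z / sigma2 N (z / 2) | N.
             prob_space N \<and> sets N = sets borel \<and> integrable N (\<lambda>x. x) \<and>
             integrable N (\<lambda>x. x\<^sup>2) \<and> (\<integral>x. x \<partial>N) = 0 \<and> sigma2 N (z / 2) > 0} = 4
      \<and> ((\<lambda>p. sigma_s2 (two_point z p) z / sigma2 (two_point z p) (z / 2))
           \<longlongrightarrow> 4) (at_right (1 / 2)))"
proof (intro conjI allI impI, goal_cases)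
  case (1 M X X')
  then interpret prob_space M
    by simp
  have tail: "expectation (\<lambda>\<omega>. (X \<omega> - X' \<omega>)\<^sup>2 * indicator {\<omega>. a + b \<le> \<bar>X \<omega> - X' \<omega>\<bar>} \<omega>)
      \<le> 2 * expectation (\<lambda>\<omega>. (X \<omega>)\<^sup>2 * indicator {\<omega>. a \<le> \<bar>X \<omega>\<bar>} \<omega>)
       + 2 * expectation (\<lambda>\<omega>. (X \<omega>)\<^sup>2 * indicator {\<omega>. b \<le> \<bar>X \<omega>\<bar>} \<omega>)"
    if "0 \<le> a" "0 \<le> b" for a b
    using 1 that by (intro iid_tail_moment_diff_le) auto
  show ?case
    unfolding Let_def
  proof (intro conjI allI impI ballI, goal_cases)
    case (1 z \<alpha>)
    then have "\<alpha> * z \<le> z"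
      by (simp add: mult_left_le_one_le)
    with 1 show ?case
      using tail[of "\<alpha> * z" "(1 - \<alpha>) * z"] by (simp add: algebra_simps)
  next
    case (2 z)
    then show ?case
      using tail[of "z / 2" "z / 2"] by simp
  qed
next
  case (2 z)
  then show ?case
    by (rule Sup_sigma_ratio)
next
  case (3 z)
  then show ?case
    by (rule tendsto_two_point_ratio)
qed

end
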